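(* Let $\alpha>3/2$, $a(x)=|x|^{-\alpha}$ and $b(x)=\Delta\,a(x)$ for $x\in\mathbb{Z}_{\neq0}$, where $\Delta\in\mathbb{R}\setminus\{0,1,-1\}$. If $K:\mathbb{Z}_{\neq0}\to\mathbb{R}$ is an odd function satisfying $$K(u)a(v)-K(v)a(u)+K(u+v)\bigl(b(u)-b(v)\bigr)=0$$ for all $u,v\in\mathbb{Z}$ with $u,v,u+v\neq0$, then $K\equiv0$.
   Context: Equivalently: for the power-law XXZ chain $\hat H=\sum_{m<n}|m-n|^{-\alpha}\bigl(\hat S^x_m\hat S^x_n+\hat S^y_m\hat S^y_n+\Delta\hat S^z_m\hat S^z_n\bigr)$ with $\Delta\neq0,\pm1$, there is no nonzero conserved two-body operator of the form $\hat K=\sum_{n\in\mathbb{Z},\,r\neq0}K(r)(\hat S^x_n\hat S^y_{n+r}-\hat S^y_n\hat S^x_{n+r})$ with $K$ odd; the displayed functional equation is exactly the condition $[\hat H,\hat K]=0$. *)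

theory Defs
  imports Complex_Main
begin

definition plaw :: "real \<Rightarrow> int \<Rightarrow> real" where
  "plaw \<alpha> x = \<bar>real_of_int x\<bar> powr (- \<alpha>)"

definition plawb :: "real \<Rightarrow> real \<Rightarrow> int \<Rightarrow> real" where
  "plawb \<alpha> \<Delta> x = \<Delta> * plaw \<alpha> x"

end

theory Submission
  imports Defs "HOL-Real_Asymp.Real_Asymp"
begin

(* Specialising the equation to v = 1 and to (u, v) = (N + 1, -1) gives two recurrences
  linking K N and K (N + 1) through K 1. Eliminating K (N + 1) shows that K N / a N tends to
  K 1 / (1 + \<Delta>) because a N \<rightarrow> 0, whereas the second recurrence alone forces that limit L to
  satisfy L = \<Delta> L - K 1. The two are compatible only if K 1 = 0, and then the second
  recurrence propagates K N = 0 to all N \<ge> 1, oddness to all N \<noteq> 0. *)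

lemma coupled_recurrences_scaled_limit:
  fixes a k :: "nat \<Rightarrow> real" and c \<Delta> :: real
  assumes pos: "\<And>n. a n > 0" and lim: "a \<longlonglongrightarrow> 0"
    and ratio: "(\<lambda>n. a (Suc n) / a n) \<longlonglongrightarrow> 1"
    and \<Delta>: "\<Delta>\<^sup>2 \<noteq> 1"
    and fwd: "\<And>n. k n - c * a n = \<Delta> * k (Suc n) * (1 - a n)"
    and bwd: "\<And>n. k (Suc n) = \<Delta> * k n * (1 - a (Suc n)) - c * a (Suc n)"
  shows "(\<lambda>n. k n / a n) \<longlonglongrightarrow> c / (1 + \<Delta>)"
proof -
  define D where "D n = 1 - \<Delta>\<^sup>2 * (1 - a n) * (1 - a (Suc n))" for n
  have eliminated: "k n / a n * D n = c * (1 - \<Delta> * (1 - a n) * (a (Suc n) / a n))" for n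
  proof -
    have "k n * D n = c * (a n - \<Delta> * (1 - a n) * a (Suc n))"
      using fwd[of n] unfolding bwd D_def by (simp add: algebra_simps power2_eq_square)
    then show ?thesis using pos[of n] by (simp add: field_simps)
  qed
  have lim_Suc: "(\<lambda>n. a (Suc n)) \<longlonglongrightarrow> 0" using lim by (rule LIMSEQ_Suc)
  have D_lim: "D \<longlonglongrightarrow> 1 - \<Delta>\<^sup>2"
    unfolding D_def using lim lim_Suc by (auto intro!: tendsto_eq_intros)
  have D_nonzero: "1 - \<Delta>\<^sup>2 \<noteq> 0" using \<Delta> by simp
  have "1 - \<Delta> \<noteq> 0" using \<Delta> by auto
  have "(\<lambda>n. c * (1 - \<Delta> * (1 - a n) * (a (Suc n) / a n))) \<longlonglongrightarrow> c * (1 - \<Delta> * (1 - 0) * 1)"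
    using lim ratio by (intro tendsto_intros)
  then have "(\<lambda>n. c * (1 - \<Delta> * (1 - a n) * (a (Suc n) / a n)) / D n) \<longlonglongrightarrow> c * (1 - \<Delta>) / (1 - \<Delta>\<^sup>2)"
    using tendsto_divide[OF _ D_lim D_nonzero] by simp
  moreover have "c * (1 - \<Delta>) / (1 - \<Delta>\<^sup>2) = c / (1 + \<Delta>)"
  proof -
    have "1 - \<Delta>\<^sup>2 = (1 - \<Delta>) * (1 + \<Delta>)" by (simp add: algebra_simps power2_eq_square)
    then show ?thesis using \<open>1 - \<Delta> \<noteq> 0\<close> by simp
  qed
  moreover have "eventually (\<lambda>n. c * (1 - \<Delta> * (1 - a n) * (a (Suc n) / a n)) / D n = k n / a n) sequentially"
    using tendsto_imp_eventually_ne[OF D_lim D_nonzero]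
    by eventually_elim (metis eliminated nonzero_mult_div_cancel_right)
  ultimately show ?thesis by (simp add: Lim_transform_eventually)
qed

lemma coupled_recurrences_source_zero:
  fixes a k :: "nat \<Rightarrow> real" and c \<Delta> :: real
  assumes pos: "\<And>n. a n > 0" and lim: "a \<longlonglongrightarrow> 0"
    and ratio: "(\<lambda>n. a (Suc n) / a n) \<longlonglongrightarrow> 1"
    and \<Delta>: "\<Delta>\<^sup>2 \<noteq> 1"
    and fwd: "\<And>n. k n - c * a n = \<Delta> * k (Suc n) * (1 - a n)"
    and bwd: "\<And>n. k (Suc n) = \<Delta> * k n * (1 - a (Suc n)) - c * a (Suc n)"
  shows "c = 0"
proof -
  define L where "L = c / (1 + \<Delta>)"
  have r_lim: "(\<lambda>n. k n / a n) \<longlonglongrightarrow> L"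
    unfolding L_def using coupled_recurrences_scaled_limit[OF assms] .
  have rescaled: "k (Suc n) / a (Suc n) = \<Delta> * (k n / a n) * (1 - a (Suc n)) / (a (Suc n) / a n) - c" for n
    using pos[of n] pos[of "Suc n"] by (simp add: bwd field_simps)
  have "(\<lambda>n. \<Delta> * (k n / a n) * (1 - a (Suc n)) / (a (Suc n) / a n) - c) \<longlonglongrightarrow> \<Delta> * L * (1 - 0) / 1 - c"
    using r_lim LIMSEQ_Suc[OF lim] ratio by (intro tendsto_intros) simp_all
  then have "(\<lambda>n. k (Suc n) / a (Suc n)) \<longlonglongrightarrow> \<Delta> * L - c"
    unfolding rescaled by simp
  moreover have "(\<lambda>n. k (Suc n) / a (Suc n)) \<longlonglongrightarrow> L" using r_lim by (rule LIMSEQ_Suc)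
  ultimately have "L = \<Delta> * L - c" using LIMSEQ_unique by fastforce
  moreover have "1 + \<Delta> \<noteq> 0" using \<Delta> power2_eq_1_iff[of \<Delta>] by auto
  ultimately show "c = 0" unfolding L_def by (simp add: field_simps)
qed

lemma plaw_one [simp]: "plaw \<alpha> 1 = 1" "plaw \<alpha> (-1) = 1"
  by (simp_all add: plaw_def)

lemma plaw_of_nat: "plaw \<alpha> (int n) = real n powr (- \<alpha>)"
  by (simp add: plaw_def)

lemma plaw_pos: "n \<noteq> 0 \<Longrightarrow> plaw \<alpha> n > 0"
  by (simp add: plaw_def)

lemma plaw_tendsto_zero:
  assumes "\<alpha> > 0"
  shows "(\<lambda>n. plaw \<alpha> (int n)) \<longlonglongrightarrow> 0"
  unfolding plaw_of_nat using assms
  by (intro tendsto_neg_powr filterlim_real_sequentially) simp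

lemma plaw_ratio_tendsto_one: "(\<lambda>n. plaw \<alpha> (int (Suc n)) / plaw \<alpha> (int n)) \<longlonglongrightarrow> 1"
proof -
  have "(\<lambda>n. (real (Suc n) / real n) powr (- \<alpha>)) \<longlonglongrightarrow> 1 powr (- \<alpha>)"
    by (intro tendsto_powr tendsto_const) (real_asymp, simp)
  moreover have "eventually (\<lambda>n. (real (Suc n) / real n) powr (- \<alpha>)
      = plaw \<alpha> (int (Suc n)) / plaw \<alpha> (int n)) sequentially"
    using eventually_gt_at_top[of 0] by eventually_elim (simp only: plaw_of_nat powr_divide of_nat_0_le_iff)
  ultimately show ?thesis by (simp add: Lim_transform_eventually)
qed

lemma kernel_recurrence_right:
  fixes K :: "int \<Rightarrow> real"
  assumes eq: "\<And>u v. u \<noteq> 0 \<Longrightarrow> v \<noteq> 0 \<Longrightarrow> u + v \<noteq> 0 \<Longrightarrow>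
       K u * plaw \<alpha> v - K v * plaw \<alpha> u + K (u + v) * (plawb \<alpha> \<Delta> u - plawb \<alpha> \<Delta> v) = 0"
    and "N \<ge> 1"
  shows "K N - K 1 * plaw \<alpha> N = \<Delta> * K (N + 1) * (1 - plaw \<alpha> N)"
  using eq[of N 1] \<open>N \<ge> 1\<close> by (simp add: plawb_def algebra_simps)

lemma kernel_recurrence_left:
  fixes K :: "int \<Rightarrow> real"
  assumes odd: "\<And>x. x \<noteq> 0 \<Longrightarrow> K (- x) = - K x"
    and eq: "\<And>u v. u \<noteq> 0 \<Longrightarrow> v \<noteq> 0 \<Longrightarrow> u + v \<noteq> 0 \<Longrightarrow>
       K u * plaw \<alpha> v - K v * plaw \<alpha> u + K (u + v) * (plawb \<alpha> \<Delta> u - plawb \<alpha> \<Delta> v) = 0"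
    and "N \<ge> 1"
  shows "K (N + 1) = \<Delta> * K N * (1 - plaw \<alpha> (N + 1)) - K 1 * plaw \<alpha> (N + 1)"
  using eq[of "N + 1" "-1"] odd[of 1] \<open>N \<ge> 1\<close> by (simp add: plawb_def algebra_simps)

lemma kernel_at_one_eq_zero:
  fixes K :: "int \<Rightarrow> real"
  assumes alpha: "\<alpha> > 0" and Delta: "\<Delta>\<^sup>2 \<noteq> 1"
    and odd: "\<And>x. x \<noteq> 0 \<Longrightarrow> K (- x) = - K x"
    and eq: "\<And>u v. u \<noteq> 0 \<Longrightarrow> v \<noteq> 0 \<Longrightarrow> u + v \<noteq> 0 \<Longrightarrow>
       K u * plaw \<alpha> v - K v * plaw \<alpha> u + K (u + v) * (plawb \<alpha> \<Delta> u - plawb \<alpha> \<Delta> v) = 0"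
  shows "K 1 = 0"
proof (rule coupled_recurrences_source_zero
    [where a = "\<lambda>n. plaw \<alpha> (int (n + 2))" and k = "\<lambda>n. K (int (n + 2))" and \<Delta> = \<Delta>])
  show "(\<lambda>n. plaw \<alpha> (int (n + 2))) \<longlonglongrightarrow> 0"
    using LIMSEQ_ignore_initial_segment[OF plaw_tendsto_zero, of \<alpha> 2] alpha by (simp add: ac_simps)
  show "(\<lambda>n. plaw \<alpha> (int (Suc n + 2)) / plaw \<alpha> (int (n + 2))) \<longlonglongrightarrow> 1"
    using LIMSEQ_ignore_initial_segment[OF plaw_ratio_tendsto_one, of \<alpha> 2] by (simp add: ac_simps)
  fix n
  show "plaw \<alpha> (int (n + 2)) > 0" by (simp add: plaw_pos)
  show "K (int (n + 2)) - K 1 * plaw \<alpha> (int (n + 2))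
      = \<Delta> * K (int (Suc n + 2)) * (1 - plaw \<alpha> (int (n + 2)))"
    using kernel_recurrence_right[OF eq, of "int n + 2"] by (simp add: ac_simps)
  show "K (int (Suc n + 2)) = \<Delta> * K (int (n + 2)) * (1 - plaw \<alpha> (int (Suc n + 2)))
      - K 1 * plaw \<alpha> (int (Suc n + 2))"
    using kernel_recurrence_left[OF odd eq, of "int n + 2"] by (simp add: ac_simps)
qed (fact Delta)

lemma kernel_eq_zero_if_at_one:
  fixes K :: "int \<Rightarrow> real"
  assumes odd: "\<And>x. x \<noteq> 0 \<Longrightarrow> K (- x) = - K x"
    and eq: "\<And>u v. u \<noteq> 0 \<Longrightarrow> v \<noteq> 0 \<Longrightarrow> u + v \<noteq> 0 \<Longrightarrow>
       K u * plaw \<alpha> v - K v * plaw \<alpha> u + K (u + v) * (plawb \<alpha> \<Delta> u - plawb \<alpha> \<Delta> v) = 0"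
    and K1: "K 1 = 0" and "z \<noteq> 0"
  shows "K z = 0"
proof -
  have shifted: "K (int n + 1) = 0" for n
  proof (induction n)
    case (Suc n)
    then show ?case using kernel_recurrence_left[OF odd eq, of "int n + 1"] K1 by (simp add: ac_simps)
  qed (simp add: K1)
  have pos: "K y = 0" if "y > 0" for y
    using shifted[of "nat (y - 1)"] that by simp
  from \<open>z \<noteq> 0\<close> consider "z > 0" | "- z > 0" by linarith
  then show "K z = 0" using pos odd[OF \<open>z \<noteq> 0\<close>] by cases auto
qed

theorem mainTheorem5:
  fixes \<alpha> \<Delta> :: real and K :: "int \<Rightarrow> real"
  assumes alpha: "\<alpha> > 3/2"
    and Delta: "\<Delta> \<noteq> 0" "\<Delta> \<noteq> 1" "\<Delta> \<noteq> -1"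
    and odd: "\<And>x. x \<noteq> 0 \<Longrightarrow> K (- x) = - K x"
    and eq: "\<And>u v. u \<noteq> 0 \<Longrightarrow> v \<noteq> 0 \<Longrightarrow> u + v \<noteq> 0 \<Longrightarrow>
       K u * plaw \<alpha> v - K v * plaw \<alpha> u + K (u + v) * (plawb \<alpha> \<Delta> u - plawb \<alpha> \<Delta> v) = 0"
  shows "\<forall>x. x \<noteq> 0 \<longrightarrow> K x = 0"
proof -
  have "\<Delta>\<^sup>2 \<noteq> 1" using Delta(2,3) by (auto simp: power2_eq_1_iff)
  moreover have "\<alpha> > 0" using alpha by simp
  ultimately have "K 1 = 0" using kernel_at_one_eq_zero odd eq by blast
  then show ?thesis using kernel_eq_zero_if_at_one[OF odd eq] by blast
qed

end
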